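(* Let $T$ be a real random variable with characteristic function $\Phi(\omega)=\mathbb E[e^{i\omega T}]$. Then for all real $\omega\neq 0$, $$\mathrm{cost}(T)=\langle|T|\rangle\ \ge\ \frac{1-|\Phi(\omega)|}{|\omega|}.$$
   Context: $\langle|T|\rangle=\mathbb E|T|$ denotes the expected absolute value of $T$ (possibly infinite). *)

theory Defs
  imports "HOL-Probability.Probability"
begin

end

theory Submission
  imports Defs
begin

text \<open>Since \<open>|1 - e^{i x}| \<le> |x|\<close>, integrating against the law of \<open>T\<close> gives
  \<open>|1 - \<Phi>(\<omega>)| \<le> |\<omega>| \<langle>|T|\<rangle>\<close>, and \<open>1 - |\<Phi>(\<omega>)| \<le> |1 - \<Phi>(\<omega>)|\<close>
  by the triangle inequality.\<close>

lemma norm_one_minus_iexp_le: "cmod (1 - iexp x) \<le> \<bar>x\<bar>"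
  using iexp_approx1[of x 0] by (simp add: norm_minus_commute)

lemma (in real_distribution) norm_one_minus_char_le:
  "ennreal (cmod (1 - char M t)) \<le> ennreal \<bar>t\<bar> * (\<integral>\<^sup>+ x. ennreal \<bar>x\<bar> \<partial>M)"
proof -
  have integrable_iexp: "integrable M (\<lambda>x. iexp (t * x))"
    by (intro integrable_const_bound[where B=1]) auto
  have char_eq: "1 - char M t = (CLINT x|M. 1 - iexp (t * x))"
    unfolding char_def using integrable_iexp by (simp del: space_eq_univ add: prob_space)
  have "ennreal (cmod (1 - char M t)) \<le> (\<integral>\<^sup>+ x. cmod (1 - iexp (t * x)) \<partial>M)"
    unfolding char_eq by (rule integral_norm_bound_ennreal) (use integrable_iexp in simp)
  also have "\<dots> \<le> (\<integral>\<^sup>+ x. ennreal (\<bar>t\<bar> * \<bar>x\<bar>) \<partial>M)"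
    using norm_one_minus_iexp_le[of "t * x" for x]
    by (intro nn_integral_mono ennreal_leI) (simp add: abs_mult)
  also have "\<dots> = ennreal \<bar>t\<bar> * (\<integral>\<^sup>+ x. ennreal \<bar>x\<bar> \<partial>M)"
    by (simp add: ennreal_mult nn_integral_cmult)
  finally show ?thesis .
qed

lemma ennreal_divide_le_of_le_mult:
  fixes a c :: real and b :: ennreal
  assumes "0 < c" and "ennreal a \<le> ennreal c * b"
  shows "ennreal (a / c) \<le> b"
proof (cases "0 \<le> a")
  case True
  then have "ennreal (a / c) = ennreal a / ennreal c"
    using assms(1) by (simp add: divide_ennreal)
  also have "\<dots> \<le> b"
    using assms by (subst divide_le_posI_ennreal) (auto simp: mult.commute)
  finally show ?thesis .
next
  case False
  with assms(1) have "a / c \<le> 0"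
    by (simp add: divide_nonpos_pos)
  then show ?thesis
    by (simp add: ennreal_neg)
qed

theorem theorem2:
  fixes M :: "'a measure" and T :: "'a \<Rightarrow> real" and \<omega> :: real
  assumes "prob_space M"
    and "T \<in> borel_measurable M"
    and "\<omega> \<noteq> 0"
  shows "ennreal ((1 - cmod (char (distr M borel T) \<omega>)) / \<bar>\<omega>\<bar>)
           \<le> (\<integral>\<^sup>+ x. ennreal \<bar>T x\<bar> \<partial>M)"
proof -
  interpret prob_space M by fact
  interpret D: real_distribution "distr M borel T"
    using assms(2) by simp
  let ?\<Phi> = "char (distr M borel T) \<omega>"
  have "1 - cmod ?\<Phi> \<le> cmod (1 - ?\<Phi>)"
    by (metis norm_one norm_triangle_ineq2)
  then have "ennreal (1 - cmod ?\<Phi>) \<le> ennreal \<bar>\<omega>\<bar> * (\<integral>\<^sup>+ x. ennreal \<bar>x\<bar> \<partial>distr M borel T)"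
    using D.norm_one_minus_char_le order_trans ennreal_leI by blast
  also have "\<dots> = ennreal \<bar>\<omega>\<bar> * (\<integral>\<^sup>+ x. ennreal \<bar>T x\<bar> \<partial>M)"
    using assms(2) by (simp add: nn_integral_distr)
  finally show ?thesis
    using assms(3) by (intro ennreal_divide_le_of_le_mult) auto
qed

end
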